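(* Let $I\subseteq\mathbb{R}$ be an interval, let $f:I\to\mathbb{R}$ be differentiable on the interior $I^{\circ}$, let $a,b\in I^{\circ}$ with $a<b$, assume $f'\in L[a,b]$, and let $\alpha,\lambda\in[0,1]$. Suppose that $|f'|^{q}$ is concave on $[a,b]$ for some $q>1$, and let $p$ satisfy $\frac1p+\frac1q=1$. Define $$I_f(\lambda,\alpha,a,b)=\lambda\big(\alpha f(a)+(1-\alpha)f(b)\big)+(1-\lambda)f(\alpha a+(1-\alpha)b)-\frac{1}{b-a}\int_a^b f(x)\,dx,$$ $$E_f(\alpha,q)=(1-\alpha)\left|f'\!\left(\tfrac{(1-\alpha)b+(1+\alpha)a}{2}\right)\right|^q,\qquad F_f(\alpha,q)=\alpha\left|f'\!\left(\tfrac{(2-\alpha)b+\alpha a}{2}\right)\right|^q,$$ $$\varepsilon_1(\alpha,\lambda,p)=(\alpha\lambda)^{p+1}+(1-\alpha-\alpha\lambda)^{p+1},\qquad \varepsilon_2(\alpha,\lambda,p)=(\alpha\lambda)^{p+1}-(\alpha\lambda-1+\alpha)^{p+1}.$$ Then $|I_f(\lambda,\alpha,a,b)|\leq (b-a)\left(\frac{1}{p+1}\right)^{1/p}\cdot K$, where $K=\varepsilon_1^{1/p}(\alpha,\lambda,p)E_f^{1/q}(\alpha,q)+\varepsilon_1^{1/p}(1-\alpha,\lambda,p)F_f^{1/q}(\alpha,q)$ if $\alpha\lambda\leq 1-\alpha\leq 1-\lambda(1-\alpha)$; $K=\varepsilon_1^{1/p}(\alpha,\lambda,p)E_f^{1/q}(\alpha,q)+\varepsilon_2^{1/p}(1-\alpha,\lambda,p)F_f^{1/q}(\alpha,q)$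 if $\alpha\lambda\leq 1-\lambda(1-\alpha)\leq 1-\alpha$; $K=\varepsilon_2^{1/p}(\alpha,\lambda,p)E_f^{1/q}(\alpha,q)+\varepsilon_1^{1/p}(1-\alpha,\lambda,p)F_f^{1/q}(\alpha,q)$ if $1-\alpha\leq\alpha\lambda\leq 1-\lambda(1-\alpha)$. *)

theory Defs
  imports "HOL-Analysis.Analysis"
begin

definition I_f :: "(real \<Rightarrow> real) \<Rightarrow> real \<Rightarrow> real \<Rightarrow> real \<Rightarrow> real \<Rightarrow> real" where
  "I_f f lam \<alpha> a b =
     lam * (\<alpha> * f a + (1 - \<alpha>) * f b) + (1 - lam) * f (\<alpha> * a + (1 - \<alpha>) * b)
     - (1 / (b - a)) * integral {a..b} f"

definition E_f :: "(real \<Rightarrow> real) \<Rightarrow> real \<Rightarrow> real \<Rightarrow> real \<Rightarrow> real \<Rightarrow> real" where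
  "E_f f a b \<alpha> q = (1 - \<alpha>) * \<bar>deriv f (((1 - \<alpha>) * b + (1 + \<alpha>) * a) / 2)\<bar> powr q"

definition F_f :: "(real \<Rightarrow> real) \<Rightarrow> real \<Rightarrow> real \<Rightarrow> real \<Rightarrow> real \<Rightarrow> real" where
  "F_f f a b \<alpha> q = \<alpha> * \<bar>deriv f (((2 - \<alpha>) * b + \<alpha> * a) / 2)\<bar> powr q"

definition eps1 :: "real \<Rightarrow> real \<Rightarrow> real \<Rightarrow> real" where
  "eps1 \<alpha> lam p = (\<alpha> * lam) powr (p + 1) + (1 - \<alpha> - \<alpha> * lam) powr (p + 1)"

definition eps2 :: "real \<Rightarrow> real \<Rightarrow> real \<Rightarrow> real" where
  "eps2 \<alpha> lam p = (\<alpha> * lam) powr (p + 1) - (\<alpha> * lam - 1 + \<alpha>) powr (p + 1)"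

end

(*
  Split [a,b] at m = \<alpha>a + (1-\<alpha>)b. Integrating by parts against the kernels x - u on [a,m]
  and x - v on [m,b], with u = a + \<alpha>\<lambda>(b-a) and v = b - \<lambda>(1-\<alpha>)(b-a), gives
    (b-a) I_f = \<integral>_a^m (x-u) f'(x) dx + \<integral>_m^b (x-v) f'(x) dx.
  Each piece is estimated by Hoelder's inequality. The p-th moments of the kernels are computed
  in closed form; they produce \<epsilon>1 or \<epsilon>2 according to whether u (resp. v) lies inside
  the half-interval or not. The q-th power |f'|^q is concave, so on each half it lies below its
  supporting line at the midpoint, whose integral is the length times the midpoint value. Hoelder
  is derived from Young's inequality with a free scaling parameter applied to this integrable
  majorant.
*)

theory Submission
  imports Defs
begin

lemma le_Young_family_imp_le:
  fixes p q A B X :: real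
  assumes pq: "p > 1" "q > 1" "1 / p + 1 / q = 1" and "A \<ge> 0" "B \<ge> 0"
    and Young: "\<And>s. s > 0 \<Longrightarrow> X \<le> s powr p * A / p + B / (q * s powr q)"
  shows "X \<le> A powr (1 / p) * B powr (1 / q)"
proof -
  have lower: "X \<le> 0" if "((\<lambda>s. s powr p * A / p + B / (q * s powr q)) \<longlongrightarrow> 0) F"
    and "eventually (\<lambda>s. s > 0) F" and "F \<noteq> bot" for F
    using that by (intro tendsto_lowerbound[of _ 0 F]) (auto elim!: eventually_mono intro: Young)
  consider "A = 0" | "B = 0" | "A > 0" "B > 0" using assms by linarith
  then show ?thesis
  proof cases
    case 1
    have "((\<lambda>s. B / q * s powr (- q)) \<longlongrightarrow> 0) at_top"
      using pq by (intro tendsto_mult_right_zero tendsto_neg_powr filterlim_ident) auto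
    then have "X \<le> 0"
      by (intro lower[of at_top]) (use 1 in \<open>auto simp: powr_minus field_simps eventually_gt_at_top\<close>)
    then show ?thesis using 1 by simp
  next
    case 2
    have "((\<lambda>s. s powr p * A / p) \<longlongrightarrow> 0) (at_right 0)"
      using pq by (auto intro!: tendsto_eq_intros tendsto_zero_powrI eventually_at_rightI[of 0 1])
    then have "X \<le> 0"
      by (intro lower[of "at_right 0"]) (use 2 in \<open>auto simp: eventually_at_right_less\<close>)
    then show ?thesis using 2 by simp
  next
    case 3
    define w where "w = A powr (1 / p) * B powr (1 / q)"
    \<comment> \<open>the scaling that makes both terms of the Young bound equal\<close>
    define s where "s = (B / A) powr (1 / (p * q))"
    have "s > 0" unfolding s_def using 3 by simp
    have sp: "s powr p = B powr (1 / q) / A powr (1 / q)"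
      and sq: "s powr q = B powr (1 / p) / A powr (1 / p)"
      unfolding s_def using 3 pq by (simp_all add: powr_powr powr_divide)
    have "A = A powr (1 / p) * A powr (1 / q)" "B = B powr (1 / p) * B powr (1 / q)"
      using 3 pq by (simp_all flip: powr_add)
    then have wp: "s powr p * A = w" and wq: "B / s powr q = w"
      unfolding sp sq w_def using 3 by (simp_all add: field_simps)
    have "X \<le> s powr p * A / p + B / (q * s powr q)" using Young[OF \<open>s > 0\<close>] .
    also have "\<dots> = w * (1 / p + 1 / q)"
      using wp wq by (simp add: mult.commute[of q] ring_distribs flip: divide_divide_eq_left)
    finally show ?thesis using pq unfolding w_def by simp
  qed
qed

lemma Holder_inequality_majorants:
  fixes g k \<phi> \<psi> :: "'a::euclidean_space \<Rightarrow> real"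
  assumes pq: "p > 1" "q > 1" "1 / p + 1 / q = 1"
    and \<phi>: "(\<phi> has_integral A) S" and \<psi>: "(\<psi> has_integral B) S"
    and gk: "(\<lambda>x. \<bar>g x\<bar> * \<bar>k x\<bar>) integrable_on S"
    and g_le: "\<And>x. x \<in> S \<Longrightarrow> \<bar>g x\<bar> powr p \<le> \<phi> x"
    and k_le: "\<And>x. x \<in> S \<Longrightarrow> \<bar>k x\<bar> powr q \<le> \<psi> x"
  shows "integral S (\<lambda>x. \<bar>g x\<bar> * \<bar>k x\<bar>) \<le> A powr (1 / p) * B powr (1 / q)"
proof (rule le_Young_family_imp_le[OF pq])
  show "A \<ge> 0" using \<phi> by (rule has_integral_nonneg) (rule order_trans[OF powr_ge_zero g_le])
  show "B \<ge> 0" using \<psi> by (rule has_integral_nonneg) (rule order_trans[OF powr_ge_zero k_le])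
  fix s :: real assume s: "s > 0"
  have "\<bar>g x\<bar> * \<bar>k x\<bar> \<le> s powr p * \<phi> x / p + \<psi> x / (q * s powr q)" if "x \<in> S" for x
  proof -
    have "\<bar>g x\<bar> * \<bar>k x\<bar> = (s * \<bar>g x\<bar>) * (\<bar>k x\<bar> / s)" using s by simp
    also have "\<dots> \<le> (s * \<bar>g x\<bar>) powr p / p + (\<bar>k x\<bar> / s) powr q / q"
      by (rule Youngs_inequality) (use pq s in auto)
    also have "\<dots> = s powr p * \<bar>g x\<bar> powr p / p + \<bar>k x\<bar> powr q / (q * s powr q)"
      using s by (simp add: powr_mult powr_divide)
    also have "\<dots> \<le> s powr p * \<phi> x / p + \<psi> x / (q * s powr q)"
      using g_le[OF that] k_le[OF that] s pq
      by (intro add_mono divide_right_mono mult_left_mono) auto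
    finally show ?thesis .
  qed
  then show "integral S (\<lambda>x. \<bar>g x\<bar> * \<bar>k x\<bar>) \<le> s powr p * A / p + B / (q * s powr q)"
    by (rule has_integral_le[OF integrable_integral[OF gk]
          has_integral_add[OF has_integral_divide[OF has_integral_mult_right[OF \<phi>]] has_integral_divide[OF \<psi>]]])
qed

lemma convex_on_chord_slopes_le:
  fixes g :: "real \<Rightarrow> real"
  assumes "convex_on S g" "y \<in> S" "z \<in> S" "y < c" "c < z"
  shows "(g c - g y) / (c - y) \<le> (g z - g c) / (z - c)"
proof -
  have "(g y - g c) / (y - c) \<le> (g c - g z) / (c - z)"
    using convex_on_slope_le[OF assms] by linarith
  moreover have "(g y - g c) / (y - c) = (g c - g y) / (c - y)" "(g c - g z) / (c - z) = (g z - g c) / (z - c)"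
    by (metis minus_diff_eq minus_divide_divide)+
  ultimately show ?thesis by simp
qed

lemma convex_on_supporting_line:
  fixes g :: "real \<Rightarrow> real"
  assumes cvx: "convex_on {a..b} g" and "a < c" "c < b"
  obtains d where "\<And>y. y \<in> {a..b} \<Longrightarrow> g c + d * (y - c) \<le> g y"
proof
  define S where "S = (\<lambda>y. (g c - g y) / (c - y)) ` {a..<c}"
  have "S \<noteq> {}" unfolding S_def using assms by auto
  have S_le: "s \<le> (g z - g c) / (z - c)" if "s \<in> S" "z \<in> {a..b}" "c < z" for s z
    using that convex_on_chord_slopes_le[OF cvx] unfolding S_def by auto
  fix y assume y: "y \<in> {a..b}"
  consider "y < c" | "y = c" | "c < y" by linarith
  then show "g c + Sup S * (y - c) \<le> g y"
  proof cases
    case 1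
    have "(g c - g y) / (c - y) \<le> Sup S"
      using 1 y assms S_le by (intro cSup_upper) (auto simp: S_def bdd_above_def)
    then have "g c - g y \<le> Sup S * (c - y)" using 1 by (simp add: divide_le_eq)
    then show ?thesis by (simp add: algebra_simps)
  next
    case 3
    have "Sup S \<le> (g y - g c) / (y - c)"
      using 3 y by (intro cSup_least[OF \<open>S \<noteq> {}\<close>] S_le)
    then have "Sup S * (y - c) \<le> g y - g c" using 3 by (simp add: le_divide_eq)
    then show ?thesis by (simp add: algebra_simps)
  qed simp
qed

lemma concave_on_integral_midpoint_majorant:
  fixes g :: "real \<Rightarrow> real"
  assumes "concave_on {a..b} g" "a \<le> l" "l \<le> r" "r \<le> b"
  obtains h where "(h has_integral (r - l) * g ((l + r) / 2)) {l..r}" "\<And>x. x \<in> {l..r} \<Longrightarrow> g x \<le> h x"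
proof (cases "l = r")
  case True
  then show ?thesis by (intro that[of "\<lambda>_. g l"]) auto
next
  case False
  define c where "c = (l + r) / 2"
  have "a < c" "c < b" using False assms unfolding c_def by auto
  then obtain d where d: "\<And>y. y \<in> {a..b} \<Longrightarrow> - g c + d * (y - c) \<le> - g y"
    using convex_on_supporting_line[of a b "\<lambda>x. - g x"] assms(1) by (auto simp: concave_on_def)
  have "((\<lambda>y. g c - d * (y - c)) has_integral
      (g c * r - d * (r - c)\<^sup>2 / 2) - (g c * l - d * (l - c)\<^sup>2 / 2)) {l..r}"
    using assms(3)
    by (intro fundamental_theorem_of_calculus)
       (auto intro!: derivative_eq_intros simp flip: has_real_derivative_iff_has_vector_derivative)
  moreover have "(r - c)\<^sup>2 = (l - c)\<^sup>2" unfolding c_def by (simp add: power2_eq_square field_simps)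
  ultimately have "((\<lambda>y. g c - d * (y - c)) has_integral (r - l) * g c) {l..r}"
    by (simp add: algebra_simps)
  moreover have "g x \<le> g c - d * (x - c)" if "x \<in> {l..r}" for x
    using d[of x] that assms by auto
  ultimately show ?thesis using that unfolding c_def by blast
qed

lemma has_integral_shifted_mult_deriv:
  fixes f f' :: "real \<Rightarrow> real"
  assumes deriv: "\<And>x. x \<in> {l..r} \<Longrightarrow> (f has_real_derivative f' x) (at x)" and "l \<le> r"
  shows "((\<lambda>x. (x - u) * f' x) has_integral (r - u) * f r - (l - u) * f l - integral {l..r} f) {l..r}"
proof -
  have cont: "continuous_on {l..r} f"
    using deriv by (meson DERIV_isCont continuous_at_imp_continuous_on)
  have "((\<lambda>x. f' x * (x - u)) has_integral (r - u) * f r - (l - u) * f l - integral {l..r} f) {l..r}"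
    using bounded_bilinear_mult \<open>l \<le> r\<close> cont
  proof (rule integration_by_parts[where f = f and g = "\<lambda>x. x - u" and g' = "\<lambda>_. 1"])
    show "continuous_on {l..r} (\<lambda>x. x - u)" by (intro continuous_intros)
    show "((\<lambda>x. x - u) has_vector_derivative 1) (at x)" for x
      by (auto intro!: derivative_eq_intros simp flip: has_real_derivative_iff_has_vector_derivative)
    show "(f has_vector_derivative f' x) (at x)" if "x \<in> {l..r}" for x
      using deriv[OF that] by (simp add: has_real_derivative_iff_has_vector_derivative)
    show "((\<lambda>x. f x * 1) has_integral f r * (r - u) - f l * (l - u) - ((r - u) * f r - (l - u) * f l - integral {l..r} f)) {l..r}"
      using integrable_continuous_interval[OF cont] by (simp add: has_integral_integral)
  qed
  then show ?thesis by (simp add: mult.commute)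
qed

lemma abs_ibp_remainder_le_Holder:
  fixes f f' :: "real \<Rightarrow> real"
  assumes deriv: "\<And>x. x \<in> {l..r} \<Longrightarrow> (f has_real_derivative f' x) (at x)" and "l \<le> r"
    and f'_int: "f' absolutely_integrable_on {l..r}"
    and concave: "concave_on {a..b} (\<lambda>x. \<bar>f' x\<bar> powr q)" and "a \<le> l" "r \<le> b"
    and pq: "p > 1" "q > 1" "1 / p + 1 / q = 1"
  shows "\<bar>(r - u) * f r - (l - u) * f l - integral {l..r} f\<bar>
    \<le> integral {l..r} (\<lambda>x. \<bar>x - u\<bar> powr p) powr (1 / p) * ((r - l) * \<bar>f' ((l + r) / 2)\<bar> powr q) powr (1 / q)"
proof -
  obtain h where h: "(h has_integral (r - l) * \<bar>f' ((l + r) / 2)\<bar> powr q) {l..r}"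
    and h_ge: "\<And>x. x \<in> {l..r} \<Longrightarrow> \<bar>f' x\<bar> powr q \<le> h x"
    using concave_on_integral_midpoint_majorant[OF concave] assms by metis
  have "(\<lambda>x. (x - u) * f' x) absolutely_integrable_on {l..r}"
    by (rule absolutely_integrable_bounded_measurable_product_real)
       (auto intro!: continuous_imp_measurable_on_sets_lebesgue continuous_intros
             compact_imp_bounded compact_continuous_image f'_int)
  then have prod_int: "(\<lambda>x. \<bar>x - u\<bar> * \<bar>f' x\<bar>) integrable_on {l..r}"
    by (simp add: absolutely_integrable_on_def abs_mult)
  have "continuous_on {l..r} (\<lambda>x. \<bar>x - u\<bar> powr p)"
    using pq by (intro continuous_on_powr' continuous_intros) auto
  then have moment: "((\<lambda>x. \<bar>x - u\<bar> powr p) has_integral integral {l..r} (\<lambda>x. \<bar>x - u\<bar> powr p)) {l..r}"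
    by (intro integrable_integral integrable_continuous_interval)
  have ibp: "((\<lambda>x. (x - u) * f' x) has_integral (r - u) * f r - (l - u) * f l - integral {l..r} f) {l..r}"
    by (rule has_integral_shifted_mult_deriv[OF deriv \<open>l \<le> r\<close>])
  then have "\<bar>(r - u) * f r - (l - u) * f l - integral {l..r} f\<bar> = norm (integral {l..r} (\<lambda>x. (x - u) * f' x))"
    by (simp add: integral_unique)
  also have "\<dots> \<le> integral {l..r} (\<lambda>x. \<bar>x - u\<bar> * \<bar>f' x\<bar>)"
    using has_integral_integrable[OF ibp] prod_int
    by (rule Henstock_Kurzweil_Integration.integral_norm_bound_integral) (simp add: abs_mult)
  also have "\<dots> \<le> integral {l..r} (\<lambda>x. \<bar>x - u\<bar> powr p) powr (1 / p) * ((r - l) * \<bar>f' ((l + r) / 2)\<bar> powr q) powr (1 / q)"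
    by (rule Holder_inequality_majorants[OF pq moment h prod_int _ h_ge]) simp
  finally show ?thesis .
qed

lemma has_integral_abs_diff_powr_right:
  fixes c l r p :: real
  assumes "p > 0" "c \<le> l" "l \<le> r"
  shows "((\<lambda>x. \<bar>x - c\<bar> powr p) has_integral ((r - c) powr (p + 1) - (l - c) powr (p + 1)) / (p + 1)) {l..r}"
proof -
  have "((\<lambda>x. (x - c) powr p) has_integral
          (r - c) powr (p + 1) / (p + 1) - (l - c) powr (p + 1) / (p + 1)) {l..r}"
  proof (rule fundamental_theorem_of_calculus_interior)
    show "continuous_on {l..r} (\<lambda>x. (x - c) powr (p + 1) / (p + 1))"
      using assms by (intro continuous_intros continuous_on_powr') auto
    fix x assume "x \<in> {l<..<r}"
    then have "x - c > 0" using assms by auto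
    then show "((\<lambda>x. (x - c) powr (p + 1) / (p + 1)) has_vector_derivative (x - c) powr p) (at x)"
      unfolding has_real_derivative_iff_has_vector_derivative[symmetric]
      using assms by (auto intro!: derivative_eq_intros)
  qed (use assms in auto)
  then have "((\<lambda>x. (x - c) powr p) has_integral
      ((r - c) powr (p + 1) - (l - c) powr (p + 1)) / (p + 1)) {l..r}"
    by (simp add: diff_divide_distrib)
  then show ?thesis
    by (rule has_integral_eq[rotated]) (use assms in auto)
qed

lemma has_integral_abs_diff_powr_left:
  fixes c l r p :: real
  assumes "p > 0" "l \<le> r" "r \<le> c"
  shows "((\<lambda>x. \<bar>x - c\<bar> powr p) has_integral ((c - l) powr (p + 1) - (c - r) powr (p + 1)) / (p + 1)) {l..r}"
  using has_integral_abs_diff_powr_right[of p "-c" "-r" "-l"] assms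
  by (subst has_integral_reflect_real[symmetric]) (simp add: abs_minus_commute[of "- _"] add.commute[of c])

lemma has_integral_abs_diff_powr_inside:
  fixes c l r p :: real
  assumes "p > 0" "l \<le> c" "c \<le> r"
  shows "((\<lambda>x. \<bar>x - c\<bar> powr p) has_integral ((c - l) powr (p + 1) + (r - c) powr (p + 1)) / (p + 1)) {l..r}"
  using has_integral_combine[OF assms(2,3) has_integral_abs_diff_powr_left[OF assms(1,2) order_refl]
      has_integral_abs_diff_powr_right[OF assms(1) order_refl assms(3)]] assms
  by (simp add: add_divide_distrib)

lemma left_moment_eps:
  fixes a b \<alpha> lam p :: real
  assumes "p > 0" "a < b" "\<alpha> \<le> 1" "0 \<le> \<alpha> * lam"
  defines "M \<equiv> integral {a..\<alpha> * a + (1 - \<alpha>) * b} (\<lambda>x. \<bar>x - (a + \<alpha> * lam * (b - a))\<bar> powr p)"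
  shows "\<alpha> * lam \<le> 1 - \<alpha> \<Longrightarrow> M = (b - a) powr (p + 1) * eps1 \<alpha> lam p / (p + 1)"
    and "1 - \<alpha> \<le> \<alpha> * lam \<Longrightarrow> M = (b - a) powr (p + 1) * eps2 \<alpha> lam p / (p + 1)"
proof -
  define L u m where "L = b - a" and "u = a + \<alpha> * lam * (b - a)" and "m = \<alpha> * a + (1 - \<alpha>) * b"
  have L: "L > 0" using assms(1-4) unfolding L_def by simp
  have M: "M = integral {a..m} (\<lambda>x. \<bar>x - u\<bar> powr p)" unfolding M_def u_def m_def ..
  have ua: "u - a = (\<alpha> * lam) * L" and mu: "m - u = (1 - \<alpha> - \<alpha> * lam) * L"
    unfolding L_def u_def m_def by (simp_all add: algebra_simps)
  have scaled: "(x * L) powr (p + 1) = L powr (p + 1) * x powr (p + 1)" if "x \<ge> 0" for x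
    using that L by (simp add: powr_mult)
  have "0 \<le> (\<alpha> * lam) * L" using L assms(4) by simp
  then have "a \<le> u" using ua by linarith
  show "M = (b - a) powr (p + 1) * eps1 \<alpha> lam p / (p + 1)" if "\<alpha> * lam \<le> 1 - \<alpha>"
  proof -
    have "0 \<le> (1 - \<alpha> - \<alpha> * lam) * L" using L that by simp
    then have "u \<le> m" using mu by linarith
    then have "M = ((u - a) powr (p + 1) + (m - u) powr (p + 1)) / (p + 1)"
      unfolding M using \<open>a \<le> u\<close> assms(1-4) by (intro integral_unique has_integral_abs_diff_powr_inside)
    also have "\<dots> = L powr (p + 1) * eps1 \<alpha> lam p / (p + 1)"
      unfolding ua mu eps1_def using assms(4) that
      by (simp only: scaled) (simp add: distrib_left)
    finally show ?thesis unfolding L_def .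
  qed
  show "M = (b - a) powr (p + 1) * eps2 \<alpha> lam p / (p + 1)" if "1 - \<alpha> \<le> \<alpha> * lam"
  proof -
    have um: "u - m = (\<alpha> * lam - 1 + \<alpha>) * L" using mu by (simp add: algebra_simps)
    have "0 \<le> (\<alpha> * lam - 1 + \<alpha>) * L" "0 \<le> (1 - \<alpha>) * L" using L that assms(3) by simp_all
    then have "m \<le> u" "a \<le> m" using um unfolding m_def L_def by (simp_all add: algebra_simps)
    then have "M = ((u - a) powr (p + 1) - (u - m) powr (p + 1)) / (p + 1)"
      unfolding M using assms(1-4) by (intro integral_unique has_integral_abs_diff_powr_left)
    also have "\<dots> = L powr (p + 1) * eps2 \<alpha> lam p / (p + 1)"
      unfolding ua um eps2_def using assms(4) that
      by (simp only: scaled) (simp add: right_diff_distrib)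
    finally show ?thesis unfolding L_def .
  qed
qed

lemma right_moment_eps:
  fixes a b \<alpha> lam p :: real
  assumes "p > 0" "a < b" "0 \<le> \<alpha>" "0 \<le> (1 - \<alpha>) * lam"
  defines "M \<equiv> integral {\<alpha> * a + (1 - \<alpha>) * b..b} (\<lambda>x. \<bar>x - (b - lam * (1 - \<alpha>) * (b - a))\<bar> powr p)"
  shows "(1 - \<alpha>) * lam \<le> \<alpha> \<Longrightarrow> M = (b - a) powr (p + 1) * eps1 (1 - \<alpha>) lam p / (p + 1)"
    and "\<alpha> \<le> (1 - \<alpha>) * lam \<Longrightarrow> M = (b - a) powr (p + 1) * eps2 (1 - \<alpha>) lam p / (p + 1)"
proof -
  \<comment> \<open>the reflection x \<mapsto> -x turns the right half into a left half with \<alpha> replaced by 1 - \<alpha>\<close>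
  define m v where "m = \<alpha> * a + (1 - \<alpha>) * b" and "v = b - lam * (1 - \<alpha>) * (b - a)"
  have "M = integral {- b..- m} (\<lambda>x. \<bar>- x - v\<bar> powr p)"
    unfolding M_def m_def[symmetric] v_def[symmetric]
    using Henstock_Kurzweil_Integration.integral_reflect_real[where f = "\<lambda>x. \<bar>x - v\<bar> powr p"] by simp
  also have "\<dots> = integral {- b..(1 - \<alpha>) * - b + (1 - (1 - \<alpha>)) * - a}
      (\<lambda>x. \<bar>x - (- b + (1 - \<alpha>) * lam * (- a - - b))\<bar> powr p)"
    unfolding m_def v_def by (simp add: algebra_simps abs_minus_commute)
  finally have "M = \<dots>" .
  then show "(1 - \<alpha>) * lam \<le> \<alpha> \<Longrightarrow> M = (b - a) powr (p + 1) * eps1 (1 - \<alpha>) lam p / (p + 1)"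
    and "\<alpha> \<le> (1 - \<alpha>) * lam \<Longrightarrow> M = (b - a) powr (p + 1) * eps2 (1 - \<alpha>) lam p / (p + 1)"
    using left_moment_eps[of p "- b" "- a" "1 - \<alpha>" lam] assms(1-4) by simp_all
qed

lemma I_f_split_identity:
  fixes f :: "real \<Rightarrow> real" and a b \<alpha> lam :: real
  assumes "a < b" "continuous_on {a..b} f" "\<alpha> \<in> {0..1}"
  defines "m \<equiv> \<alpha> * a + (1 - \<alpha>) * b" and "u \<equiv> a + \<alpha> * lam * (b - a)"
    and "v \<equiv> b - lam * (1 - \<alpha>) * (b - a)"
  shows "(b - a) * I_f f lam \<alpha> a b
    = ((m - u) * f m - (a - u) * f a - integral {a..m} f) + ((b - v) * f b - (m - v) * f m - integral {m..b} f)"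
proof -
  have "0 \<le> (1 - \<alpha>) * (b - a)" "0 \<le> \<alpha> * (b - a)" using assms(1,3) by auto
  then have "a \<le> m" "m \<le> b" unfolding m_def by (simp_all add: algebra_simps)
  then have integral_split: "integral {a..b} f = integral {a..m} f + integral {m..b} f"
    using Henstock_Kurzweil_Integration.integral_combine[OF \<open>a \<le> m\<close> \<open>m \<le> b\<close> integrable_continuous_interval[OF assms(2)]] by simp
  have "(b - a) * I_f f lam \<alpha> a b
      = (b - a) * (lam * (\<alpha> * f a + (1 - \<alpha>) * f b) + (1 - lam) * f m) - integral {a..b} f"
    using \<open>a < b\<close> unfolding I_f_def m_def by (simp add: right_diff_distrib)
  then show ?thesis
    unfolding integral_split m_def u_def v_def by (simp add: algebra_simps)
qed

lemma abs_I_f_le_moments: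
  fixes f :: "real \<Rightarrow> real" and a b \<alpha> lam p q :: real
  assumes "a < b"
    and deriv: "\<And>x. x \<in> {a..b} \<Longrightarrow> (f has_real_derivative deriv f x) (at x)"
    and f'_int: "deriv f absolutely_integrable_on {a..b}" and "\<alpha> \<in> {0..1}"
    and pq: "p > 1" "q > 1" "1 / p + 1 / q = 1"
    and concave: "concave_on {a..b} (\<lambda>x. \<bar>deriv f x\<bar> powr q)"
  defines "m \<equiv> \<alpha> * a + (1 - \<alpha>) * b" and "u \<equiv> a + \<alpha> * lam * (b - a)"
    and "v \<equiv> b - lam * (1 - \<alpha>) * (b - a)"
  shows "(b - a) * \<bar>I_f f lam \<alpha> a b\<bar>
    \<le> integral {a..m} (\<lambda>x. \<bar>x - u\<bar> powr p) powr (1 / p) * ((b - a) * E_f f a b \<alpha> q) powr (1 / q)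
      + integral {m..b} (\<lambda>x. \<bar>x - v\<bar> powr p) powr (1 / p) * ((b - a) * F_f f a b \<alpha> q) powr (1 / q)"
proof -
  have "0 \<le> (1 - \<alpha>) * (b - a)" "0 \<le> \<alpha> * (b - a)" using assms(1,4) by auto
  then have am: "a \<le> m" "m \<le> b" unfolding m_def by (simp_all add: algebra_simps)
  have scale: "(m - a) * \<bar>deriv f ((a + m) / 2)\<bar> powr q = (b - a) * E_f f a b \<alpha> q"
    "(b - m) * \<bar>deriv f ((m + b) / 2)\<bar> powr q = (b - a) * F_f f a b \<alpha> q"
  proof -
    have mid: "(a + m) / 2 = ((1 - \<alpha>) * b + (1 + \<alpha>) * a) / 2" "(m + b) / 2 = ((2 - \<alpha>) * b + \<alpha> * a) / 2"
      and len: "m - a = (1 - \<alpha>) * (b - a)" "b - m = \<alpha> * (b - a)"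
      unfolding m_def by (simp_all add: algebra_simps)
    show "(m - a) * \<bar>deriv f ((a + m) / 2)\<bar> powr q = (b - a) * E_f f a b \<alpha> q"
      "(b - m) * \<bar>deriv f ((m + b) / 2)\<bar> powr q = (b - a) * F_f f a b \<alpha> q"
      unfolding E_f_def F_f_def mid len by simp_all
  qed
  have
    "\<bar>(m - u) * f m - (a - u) * f a - integral {a..m} f\<bar>
      \<le> integral {a..m} (\<lambda>x. \<bar>x - u\<bar> powr p) powr (1 / p) * ((m - a) * \<bar>deriv f ((a + m) / 2)\<bar> powr q) powr (1 / q)"
    "\<bar>(b - v) * f b - (m - v) * f m - integral {m..b} f\<bar>
      \<le> integral {m..b} (\<lambda>x. \<bar>x - v\<bar> powr p) powr (1 / p) * ((b - m) * \<bar>deriv f ((m + b) / 2)\<bar> powr q) powr (1 / q)"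
    using am deriv by (intro abs_ibp_remainder_le_Holder[OF _ _ _ concave _ _ pq]
        absolutely_integrable_on_subinterval[OF f'_int]; force)+
  note bounds = this[unfolded scale]
  have triangle: "(b - a) * \<bar>I_f f lam \<alpha> a b\<bar>
      \<le> \<bar>(m - u) * f m - (a - u) * f a - integral {a..m} f\<bar> + \<bar>(b - v) * f b - (m - v) * f m - integral {m..b} f\<bar>"
  proof -
    have "continuous_on {a..b} f"
      using deriv by (meson DERIV_isCont continuous_at_imp_continuous_on)
    from I_f_split_identity[OF \<open>a < b\<close> this \<open>\<alpha> \<in> {0..1}\<close>, of lam]
    have identity: "(b - a) * I_f f lam \<alpha> a b
      = ((m - u) * f m - (a - u) * f a - integral {a..m} f) + ((b - v) * f b - (m - v) * f m - integral {m..b} f)"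
      unfolding m_def u_def v_def .
    have "(b - a) * \<bar>I_f f lam \<alpha> a b\<bar> = \<bar>(b - a) * I_f f lam \<alpha> a b\<bar>"
      using \<open>a < b\<close> by (intro abs_mult_pos') simp
    then show ?thesis
      unfolding identity using abs_triangle_ineq by (rule ord_eq_le_trans)
  qed
  show ?thesis using bounds triangle by linarith
qed

lemma moment_powr_mult_eq:
  fixes L e E p q :: real
  assumes "L > 0" "e \<ge> 0" "E \<ge> 0" "p > 0" "1 / p + 1 / q = 1"
  shows "(L powr (p + 1) * e / (p + 1)) powr (1 / p) * (L * E) powr (1 / q)
    = L * (L * (1 / (p + 1)) powr (1 / p) * e powr (1 / p) * E powr (1 / q))"
proof -
  have "(L powr (p + 1) * e / (p + 1)) powr (1 / p) = (L powr (p + 1)) powr (1 / p) * (e * (1 / (p + 1))) powr (1 / p)"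
    using assms by (simp flip: powr_mult)
  also have "\<dots> = L powr ((p + 1) / p) * ((1 / (p + 1)) powr (1 / p) * e powr (1 / p))"
    using assms by (simp add: powr_powr powr_divide)
  finally have "(L powr (p + 1) * e / (p + 1)) powr (1 / p) * (L * E) powr (1 / q)
      = (L powr ((p + 1) / p) * L powr (1 / q)) * ((1 / (p + 1)) powr (1 / p) * e powr (1 / p) * E powr (1 / q))"
    using assms by (simp add: powr_mult mult_ac)
  also have "L powr ((p + 1) / p) * L powr (1 / q) = L * L"
  proof -
    have "(p + 1) / p + 1 / q = 1 + 1" using assms by (simp add: add_divide_distrib)
    then show ?thesis using \<open>L > 0\<close> by (simp add: power2_eq_square flip: powr_add)
  qed
  finally show ?thesis by (simp add: mult_ac)
qed

lemma integral_nonneg_if_nonneg: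
  fixes f :: "'a::euclidean_space \<Rightarrow> real"
  assumes "\<And>x. x \<in> S \<Longrightarrow> 0 \<le> f x"
  shows "0 \<le> integral S f"
  \<comment> \<open>no integrability needed: a non-integrable function has integral 0\<close>
  using assms by (cases "f integrable_on S") (auto intro: integral_nonneg simp: not_integrable_integral)

lemma abs_I_f_le_eps_form:
  fixes f :: "real \<Rightarrow> real" and a b \<alpha> lam p q e1 e2 :: real
  assumes "a < b"
    and deriv: "\<And>x. x \<in> {a..b} \<Longrightarrow> (f has_real_derivative deriv f x) (at x)"
    and "deriv f absolutely_integrable_on {a..b}" and "\<alpha> \<in> {0..1}"
    and pq: "p > 1" "q > 1" "1 / p + 1 / q = 1"
    and "concave_on {a..b} (\<lambda>x. \<bar>deriv f x\<bar> powr q)"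
  defines "m \<equiv> \<alpha> * a + (1 - \<alpha>) * b" and "u \<equiv> a + \<alpha> * lam * (b - a)"
    and "v \<equiv> b - lam * (1 - \<alpha>) * (b - a)"
  assumes moment1: "integral {a..m} (\<lambda>x. \<bar>x - u\<bar> powr p) = (b - a) powr (p + 1) * e1 / (p + 1)"
    and moment2: "integral {m..b} (\<lambda>x. \<bar>x - v\<bar> powr p) = (b - a) powr (p + 1) * e2 / (p + 1)"
  shows "\<bar>I_f f lam \<alpha> a b\<bar> \<le> (b - a) * (1 / (p + 1)) powr (1 / p) *
    (e1 powr (1 / p) * E_f f a b \<alpha> q powr (1 / q) + e2 powr (1 / p) * F_f f a b \<alpha> q powr (1 / q))"
proof -
  have "e1 \<ge> 0" "e2 \<ge> 0"
    using integral_nonneg_if_nonneg[of "{a..m}" "\<lambda>x. \<bar>x - u\<bar> powr p"]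
      integral_nonneg_if_nonneg[of "{m..b}" "\<lambda>x. \<bar>x - v\<bar> powr p"] \<open>a < b\<close> pq
    unfolding moment1 moment2 by (simp_all add: zero_le_mult_iff zero_le_divide_iff)
  moreover have "E_f f a b \<alpha> q \<ge> 0" "F_f f a b \<alpha> q \<ge> 0"
    using \<open>\<alpha> \<in> {0..1}\<close> unfolding E_f_def F_f_def by simp_all
  ultimately have eq: "integral {a..m} (\<lambda>x. \<bar>x - u\<bar> powr p) powr (1 / p) * ((b - a) * E_f f a b \<alpha> q) powr (1 / q)
      + integral {m..b} (\<lambda>x. \<bar>x - v\<bar> powr p) powr (1 / p) * ((b - a) * F_f f a b \<alpha> q) powr (1 / q)
    = (b - a) * ((b - a) * (1 / (p + 1)) powr (1 / p) *
      (e1 powr (1 / p) * E_f f a b \<alpha> q powr (1 / q) + e2 powr (1 / p) * F_f f a b \<alpha> q powr (1 / q)))"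
    unfolding moment1 moment2 using \<open>a < b\<close> pq
    by (simp only: moment_powr_mult_eq diff_gt_0_iff_gt) (simp add: algebra_simps)
  have "(b - a) * \<bar>I_f f lam \<alpha> a b\<bar>
      \<le> integral {a..m} (\<lambda>x. \<bar>x - u\<bar> powr p) powr (1 / p) * ((b - a) * E_f f a b \<alpha> q) powr (1 / q)
      + integral {m..b} (\<lambda>x. \<bar>x - v\<bar> powr p) powr (1 / p) * ((b - a) * F_f f a b \<alpha> q) powr (1 / q)"
    using abs_I_f_le_moments[OF assms(1-8), of lam] unfolding m_def u_def v_def .
  then show ?thesis
    unfolding eq using \<open>a < b\<close> by simp
qed

lemma conjugate_exponent_gt_1:
  fixes p q :: real
  assumes "q > 1" "1 / p + 1 / q = 1"
  shows "p > 1"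
proof -
  have "1 / p = 1 - 1 / q" using assms(2) by simp
  moreover have "0 < 1 / q" "1 / q < 1" using assms(1) by auto
  ultimately have "0 < 1 / p" "1 / p < 1" by linarith+
  then show ?thesis by (simp add: divide_less_eq zero_less_divide_1_iff)
qed

theorem corollary2p7:
  fixes f :: "real \<Rightarrow> real" and I :: "real set"
    and a b \<alpha> lam p q :: real
  assumes "is_interval I"
    and "f differentiable_on interior I"
    and "a \<in> interior I" and "b \<in> interior I" and "a < b"
    and "deriv f absolutely_integrable_on {a..b}"
    and "\<alpha> \<in> {0..1}" and "lam \<in> {0..1}"
    and "q > 1"
    and "concave_on {a..b} (\<lambda>x. \<bar>deriv f x\<bar> powr q)"
    and "1 / p + 1 / q = 1"
  shows
    "(\<alpha> * lam \<le> 1 - \<alpha> \<and> 1 - \<alpha> \<le> 1 - lam * (1 - \<alpha>) \<longrightarrow>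
       \<bar>I_f f lam \<alpha> a b\<bar> \<le> (b - a) * (1 / (p + 1)) powr (1 / p) *
         (eps1 \<alpha> lam p powr (1 / p) * E_f f a b \<alpha> q powr (1 / q)
          + eps1 (1 - \<alpha>) lam p powr (1 / p) * F_f f a b \<alpha> q powr (1 / q)))
     \<and>
     (\<alpha> * lam \<le> 1 - lam * (1 - \<alpha>) \<and> 1 - lam * (1 - \<alpha>) \<le> 1 - \<alpha> \<longrightarrow>
       \<bar>I_f f lam \<alpha> a b\<bar> \<le> (b - a) * (1 / (p + 1)) powr (1 / p) *
         (eps1 \<alpha> lam p powr (1 / p) * E_f f a b \<alpha> q powr (1 / q)
          + eps2 (1 - \<alpha>) lam p powr (1 / p) * F_f f a b \<alpha> q powr (1 / q)))
     \<and>
     (1 - \<alpha> \<le> \<alpha> * lam \<and> \<alpha> * lam \<le> 1 - lam * (1 - \<alpha>) \<longrightarrow>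
       \<bar>I_f f lam \<alpha> a b\<bar> \<le> (b - a) * (1 / (p + 1)) powr (1 / p) *
         (eps2 \<alpha> lam p powr (1 / p) * E_f f a b \<alpha> q powr (1 / q)
          + eps1 (1 - \<alpha>) lam p powr (1 / p) * F_f f a b \<alpha> q powr (1 / q)))"
proof -
  have "p > 1" using conjugate_exponent_gt_1 assms(9,11) .
  have "closed_segment a b \<subseteq> interior I"
    using assms(1,3,4) by (intro convex_contains_segment[THEN iffD1, rule_format] convex_interior is_interval_convex)
  then have "{a..b} \<subseteq> interior I"
    using assms(5) by (simp add: closed_segment_eq_real_ivl)
  then have deriv: "(f has_real_derivative deriv f x) (at x)" if "x \<in> {a..b}" for x
    using assms(2) that by (meson DERIV_deriv_iff_real_differentiable differentiable_on_eq_differentiable_at open_interior subsetD)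
  note bound = abs_I_f_le_eps_form[OF assms(5) deriv assms(6,7) \<open>p > 1\<close> assms(9,11,10)]
  have "0 \<le> \<alpha> * lam" "0 \<le> (1 - \<alpha>) * lam" "\<alpha> \<le> 1" "0 \<le> \<alpha>" "0 < p"
    using assms(7,8) \<open>p > 1\<close> by auto
  note left = left_moment_eps[OF \<open>0 < p\<close> assms(5) \<open>\<alpha> \<le> 1\<close> \<open>0 \<le> \<alpha> * lam\<close>]
    and right = right_moment_eps[OF \<open>0 < p\<close> assms(5) \<open>0 \<le> \<alpha>\<close> \<open>0 \<le> (1 - \<alpha>) * lam\<close>]
  let ?K = "\<lambda>e1 e2. (b - a) * (1 / (p + 1)) powr (1 / p) *
    (e1 powr (1 / p) * E_f f a b \<alpha> q powr (1 / q) + e2 powr (1 / p) * F_f f a b \<alpha> q powr (1 / q))"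
  have inside_inside: "\<bar>I_f f lam \<alpha> a b\<bar> \<le> ?K (eps1 \<alpha> lam p) (eps1 (1 - \<alpha>) lam p)"
    if "\<alpha> * lam \<le> 1 - \<alpha>" "(1 - \<alpha>) * lam \<le> \<alpha>"
    using that by (intro bound left(1) right(1))
  have inside_outside: "\<bar>I_f f lam \<alpha> a b\<bar> \<le> ?K (eps1 \<alpha> lam p) (eps2 (1 - \<alpha>) lam p)"
    if "\<alpha> * lam \<le> 1 - \<alpha>" "\<alpha> \<le> (1 - \<alpha>) * lam"
    using that by (intro bound left(1) right(2))
  have outside_inside: "\<bar>I_f f lam \<alpha> a b\<bar> \<le> ?K (eps2 \<alpha> lam p) (eps1 (1 - \<alpha>) lam p)"
    if "1 - \<alpha> \<le> \<alpha> * lam" "(1 - \<alpha>) * lam \<le> \<alpha>"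
    using that by (intro bound left(2) right(1))
  \<comment> \<open>in the third case the second condition is implied by the first and is not needed\<close>
  have "(1 - \<alpha>) * lam \<le> \<alpha>" if "1 - \<alpha> \<le> \<alpha> * lam"
  proof -
    have "(1 - \<alpha>) * lam \<le> (\<alpha> * lam) * lam" using that assms(8) by (intro mult_right_mono) auto
    also have "\<dots> \<le> \<alpha>" using assms(7,8) by (auto simp: mult.assoc intro!: mult_left_le mult_le_one)
    finally show ?thesis .
  qed
  then show ?thesis
    using inside_inside inside_outside outside_inside by (auto simp: algebra_simps)
qed

end
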